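(* Assume the Dickson--Hardy--Littlewood conjecture: every admissible tuple $(h_1,\dots,h_k)$ of natural numbers is prime-producing. Then there exists an infinite set $B$ of primes such that $b+b'+1$ is prime for every pair of distinct $b,b' \in B$.
   Context: A tuple $(h_1,\dots,h_k)$ of natural numbers is admissible if for every prime $p$ there is at least one residue class mod $p$ containing none of $h_1,\dots,h_k$. A tuple $(h_1,\dots,h_k)$ is prime-producing if there are infinitely many integers $n$ such that $n+h_1,\dots,n+h_k$ are all prime. *)

theory Defs
  imports "HOL-Computational_Algebra.Primes"
begin

definition admissible :: "nat list \<Rightarrow> bool" where
  "admissible hs \<longleftrightarrow>
     (\<forall>p::nat. prime p \<longrightarrow> (\<exists>r<p. \<forall>h\<in>set hs. h mod p \<noteq> r))"

definition prime_producing :: "nat list \<Rightarrow> bool" where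
  "prime_producing hs \<longleftrightarrow>
     infinite {n::int. \<forall>h\<in>set hs. prime (n + int h)}"

definition DHL :: bool where
  "DHL \<longleftrightarrow> (\<forall>hs. admissible hs \<longrightarrow> prime_producing hs)"

end

theory Submission
  imports Defs "HOL-Number_Theory.Cong" "HOL-Library.Infinite_Set"
begin

text \<open>
  The primes b 0, b 1, ... are chosen one at a time. Given b 0, ..., b (k - 1), any large n with n
  and all n + b i + 1 prime can serve as b k, and DHL supplies such n as soon as the shifts
  0, b 0 + 1, ..., b (k - 1) + 1 form an admissible tuple. DHL keeps supplying them after the tuple is
  padded by shifts a \<equiv> r (mod p) that rule out every residue of n modulo a small prime p except a
  prescribed class c p; the padding is divisible by all other small primes, so it costs nothing in
  admissibility. Choosing c p to be the common residue of the earlier elements modulo p keeps all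
  elements congruent modulo p from some index on, which makes the tuple admissible at small primes
  however long the sequence gets; at larger primes it has fewer elements than residue classes.
\<close>

text \<open>In \<open>nat\<close>, \<open>(p - 1) * c\<close> stands for \<open>-c\<close> modulo \<open>p\<close>.\<close>

lemma dvd_add_of_cong_neg:
  fixes p c h :: nat
  assumes "0 < p" "[h = (p - 1) * c] (mod p)"
  shows "p dvd c + h"
proof -
  have "[c + h = c + (p - 1) * c] (mod p)" using assms(2) by (rule cong_add[OF cong_refl])
  also have "c + (p - 1) * c = p * c" using assms(1) by (cases p) simp_all
  finally show ?thesis using cong_dvd_iff by force
qed

lemma cong_neg_of_dvd_add:
  fixes p c h :: nat
  assumes "0 < p" "p dvd c + h"
  shows "[c = (p - 1) * h] (mod p)"
proof -
  have "[c + h = 0] (mod p)" using assms(2) by (simp add: cong_0_iff)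
  moreover have "[(p - 1) * h + h = 0] (mod p)"
  proof -
    have "(p - 1) * h + h = p * h" using assms(1) by (cases p) simp_all
    thus ?thesis by (simp add: cong_0_iff)
  qed
  ultimately have "[c + h = (p - 1) * h + h] (mod p)" using cong_sym cong_trans by blast
  thus ?thesis by (simp add: cong_add_rcancel_nat)
qed

lemma exists_shift_avoiding_multiples:
  fixes p :: nat and H :: "nat set"
  assumes "finite H" "card H < p"
  shows "\<exists>c. \<forall>h\<in>H. \<not> p dvd c + h"
proof -
  define R where "R = (\<lambda>h. (p - 1) * h mod p) ` H"
  have "card R < p" unfolding R_def using card_image_le[OF assms(1)] assms(2) le_less_trans by blast
  moreover have "finite R" unfolding R_def using assms(1) by simp
  ultimately have "{..<p} - R \<noteq> {}" using card_mono[of R "{..<p}"] by auto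
  then obtain c where c: "c < p" "c \<notin> R" by blast
  have "\<not> p dvd c + h" if "h \<in> H" for h
  proof
    assume "p dvd c + h"
    hence "[c = (p - 1) * h] (mod p)" using cong_neg_of_dvd_add c(1) by simp
    hence "c = (p - 1) * h mod p" using c(1) by (simp add: cong_def)
    thus False using c(2) that unfolding R_def by blast
  qed
  thus ?thesis by blast
qed

lemma dvd_add_half_if_dvd_double_succ:
  fixes p c :: nat
  assumes "p dvd 2 * c + 1"
  shows "p dvd c + (p + 1) div 2"
proof -
  have "odd p" using assms dvd_trans[of 2 p "2 * c + 1"] by auto
  hence "2 * (c + (p + 1) div 2) = (2 * c + 1) + p" by simp
  moreover have "p dvd (2 * c + 1) + p" using assms by (rule dvd_add) simp
  ultimately have "p dvd 2 * (c + (p + 1) div 2)" by simp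
  moreover have "coprime p 2" using \<open>odd p\<close> by simp
  ultimately show ?thesis using coprime_dvd_mult_right_iff by blast
qed

lemma exists_shift_avoiding_multiples_and_half:
  fixes p :: nat and H :: "nat set"
  assumes "finite H" "card H + 1 < p"
  shows "\<exists>c. \<not> p dvd 2 * c + 1 \<and> (\<forall>h\<in>H. \<not> p dvd c + h)"
proof -
  have "card (insert ((p + 1) div 2) H) < p" using assms by (simp add: card_insert_if)
  then obtain c where "\<forall>h\<in>insert ((p + 1) div 2) H. \<not> p dvd c + h"
    using exists_shift_avoiding_multiples assms(1) by blast
  thus ?thesis using dvd_add_half_if_dvd_double_succ by blast
qed

lemma admissible_if_avoiding_shifts:
  assumes "\<And>p. prime p \<Longrightarrow> \<exists>c. \<forall>h\<in>set hs. \<not> p dvd c + h"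
  shows "admissible hs"
  unfolding admissible_def
proof (intro allI impI)
  fix p :: nat assume "prime p"
  then obtain c where c: "\<forall>h\<in>set hs. \<not> p dvd c + h" using assms by blast
  have p: "0 < p" using \<open>prime p\<close> prime_gt_0_nat by blast
  have "h mod p \<noteq> (p - 1) * c mod p" if "h \<in> set hs" for h
    using c that dvd_add_of_cong_neg[OF p] unfolding cong_def by blast
  thus "\<exists>r<p. \<forall>h\<in>set hs. h mod p \<noteq> r" using p by (intro exI[of _ "(p - 1) * c mod p"]) auto
qed

lemma exists_cong_divisible_by_other_primes:
  fixes p r Z :: nat
  assumes "prime p"
  shows "\<exists>a. [a = r] (mod p) \<and> (\<forall>q. prime q \<longrightarrow> q \<le> Z \<longrightarrow> q \<noteq> p \<longrightarrow> q dvd a)"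
proof -
  define Q where "Q = {q. prime q \<and> q \<le> Z \<and> q \<noteq> p}"
  have "finite Q" unfolding Q_def by simp
  have "coprime (\<Prod>Q) p"
    by (rule prod_coprime_left) (use assms in \<open>auto simp: Q_def intro: primes_coprime\<close>)
  then obtain x where "[\<Prod>Q * x = 1] (mod p)" using cong_solve_coprime_nat by auto
  hence "[\<Prod>Q * x * r = 1 * r] (mod p)" by (rule cong_mult[OF _ cong_refl])
  moreover have "q dvd \<Prod>Q * x * r" if "prime q" "q \<le> Z" "q \<noteq> p" for q
  proof -
    have "q dvd \<Prod>Q" using that \<open>finite Q\<close> by (intro dvd_prodI) (auto simp: Q_def)
    thus ?thesis by simp
  qed
  ultimately show ?thesis by (intro exI[of _ "\<Prod>Q * x * r"]) auto
qed

lemma residue_forced_by_prime_translates: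
  fixes p c n :: nat and a :: "nat \<Rightarrow> nat"
  assumes "prime p" "p < n"
    and "\<And>r. r < p \<Longrightarrow> \<not> p dvd c + r \<Longrightarrow> [a r = r] (mod p) \<and> prime (n + a r)"
  shows "[n = c] (mod p)"
proof (rule ccontr)
  assume not_forced: "\<not> [n = c] (mod p)"
  have "0 < p" using assms(1) prime_gt_0_nat by blast
  define r where "r = (p - 1) * n mod p"
  have "r < p" unfolding r_def using \<open>0 < p\<close> by simp
  have "p dvd n + r"
    using dvd_add_of_cong_neg[OF \<open>0 < p\<close>, of r n] unfolding r_def by (simp add: cong_def)
  have "\<not> p dvd c + r"
  proof
    assume "p dvd c + r"
    hence "[c + r = n + r] (mod p)" using \<open>p dvd n + r\<close> by (simp add: cong_def dvd_eq_mod_eq_0)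
    thus False using not_forced cong_sym unfolding cong_add_rcancel_nat by blast
  qed
  then obtain "[a r = r] (mod p)" "prime (n + a r)" using assms(3) \<open>r < p\<close> by blast
  moreover from this(1) have "p dvd n + a r"
    using \<open>p dvd n + r\<close> cong_dvd_iff[OF cong_add[OF cong_refl]] by blast
  moreover have "p < n + a r" using assms(2) by simp
  ultimately show False using assms(1) primes_dvd_imp_eq by (metis less_not_refl)
qed

lemma padding_avoids_shift:
  fixes H :: "nat set" and D :: "(nat \<times> nat) set" and a :: "nat \<Rightarrow> nat \<Rightarrow> nat"
  assumes "finite H" "0 \<in> H" "finite D" "prime q"
    and a: "\<And>p r. (p, r) \<in> D \<Longrightarrow> [a p r = r] (mod p) \<and>
      (\<forall>q. prime q \<longrightarrow> q \<le> card H + card D \<longrightarrow> q \<noteq> p \<longrightarrow> q dvd a p r)"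
    and s: "\<exists>s. (\<forall>h\<in>H. \<not> q dvd s + h) \<and> (\<forall>r. (q, r) \<in> D \<longrightarrow> \<not> q dvd s + r)"
  shows "\<exists>s. \<forall>h\<in>H \<union> (\<lambda>(p, r). a p r) ` D. \<not> q dvd s + h"
proof (cases "card H + card D < q")
  case True
  have "card (H \<union> (\<lambda>(p, r). a p r) ` D) \<le> card H + card ((\<lambda>(p, r). a p r) ` D)" by (rule card_Un_le)
  also have "\<dots> \<le> card H + card D" using card_image_le[OF \<open>finite D\<close>] by simp
  finally show ?thesis using True exists_shift_avoiding_multiples assms(1,3) by simp
next
  case False
  from s obtain s where s: "\<forall>h\<in>H. \<not> q dvd s + h" "\<And>r. (q, r) \<in> D \<Longrightarrow> \<not> q dvd s + r" by blast
  have "\<not> q dvd s + a p r" if "(p, r) \<in> D" for p r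
  proof (cases "p = q")
    case True
    have "[s + a p r = s + r] (mod q)" using a[OF that] True by (intro cong_add cong_refl) simp
    thus ?thesis using s(2) that True cong_dvd_iff by metis
  next
    case p_ne_q: False
    show ?thesis
    proof
      assume "q dvd s + a p r"
      moreover have "q dvd a p r" using a[OF that] \<open>prime q\<close> p_ne_q False by (simp add: not_less)
      ultimately have "q dvd s + 0" by (simp add: dvd_add_left_iff)
      thus False using s(1) \<open>0 \<in> H\<close> by blast
    qed
  qed
  hence "\<forall>h\<in>H \<union> (\<lambda>(p, r). a p r) ` D. \<not> q dvd s + h" using s(1) by auto
  thus ?thesis ..
qed

lemma admissible_superset_forcing_residues:
  fixes H P :: "nat set" and c :: "nat \<Rightarrow> nat"
  assumes "finite H" "0 \<in> H" "finite P" and P_prime: "\<And>p. p \<in> P \<Longrightarrow> prime p"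
    and avoid_P: "\<And>p h. p \<in> P \<Longrightarrow> h \<in> H \<Longrightarrow> \<not> p dvd c p + h"
    and avoid_other: "\<And>q. prime q \<Longrightarrow> q \<notin> P \<Longrightarrow> \<exists>c. \<forall>h\<in>H. \<not> q dvd c + h"
  shows "\<exists>T. finite T \<and> H \<subseteq> T \<and> (\<forall>q. prime q \<longrightarrow> (\<exists>c. \<forall>h\<in>T. \<not> q dvd c + h)) \<and>
           (\<forall>n. (\<forall>h\<in>T. prime (n + h)) \<longrightarrow> (\<forall>p\<in>P. p < n) \<longrightarrow> (\<forall>p\<in>P. [n = c p] (mod p)))"
proof -
  define D where "D = {(p, r). p \<in> P \<and> r < p \<and> \<not> p dvd c p + r}"
  have "finite D"
    by (rule finite_subset[of _ "Sigma P (\<lambda>p. {..<p})"]) (use \<open>finite P\<close> in \<open>auto simp: D_def\<close>)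
  define Z where "Z = card H + card D"
  have "\<forall>p r. \<exists>x. prime p \<longrightarrow>
      [x = r] (mod p) \<and> (\<forall>q. prime q \<longrightarrow> q \<le> Z \<longrightarrow> q \<noteq> p \<longrightarrow> q dvd x)"
    using exists_cong_divisible_by_other_primes by blast
  then obtain a where a: "\<And>p r. prime p \<Longrightarrow>
      [a p r = r] (mod p) \<and> (\<forall>q. prime q \<longrightarrow> q \<le> Z \<longrightarrow> q \<noteq> p \<longrightarrow> q dvd a p r)"
    by metis
  define T where "T = H \<union> (\<lambda>(p, r). a p r) ` D"
  have "finite T" unfolding T_def using \<open>finite H\<close> \<open>finite D\<close> by simp
  have "\<exists>s. \<forall>h\<in>T. \<not> q dvd s + h" if "prime q" for q
  proof -
    have "\<exists>s. (\<forall>h\<in>H. \<not> q dvd s + h) \<and> (\<forall>r. (q, r) \<in> D \<longrightarrow> \<not> q dvd s + r)"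
    proof (cases "q \<in> P")
      case True
      thus ?thesis using avoid_P unfolding D_def by (intro exI[of _ "c q"]) auto
    next
      case False
      thus ?thesis using avoid_other[OF \<open>prime q\<close>] unfolding D_def by auto
    qed
    moreover have "[a p r = r] (mod p) \<and> (\<forall>q. prime q \<longrightarrow> q \<le> Z \<longrightarrow> q \<noteq> p \<longrightarrow> q dvd a p r)"
      if "(p, r) \<in> D" for p r
      using a P_prime that unfolding D_def by blast
    ultimately show ?thesis unfolding T_def
      by (rule padding_avoids_shift[OF \<open>finite H\<close> \<open>0 \<in> H\<close> \<open>finite D\<close> \<open>prime q\<close>, folded Z_def, rotated])
  qed
  moreover have "[n = c p] (mod p)"
    if n: "\<forall>h\<in>T. prime (n + h)" and "\<forall>p\<in>P. p < n" and p: "p \<in> P" for n p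
  proof (rule residue_forced_by_prime_translates[OF P_prime[OF p]])
    show "p < n" using that(2) p by blast
    show "[a p r = r] (mod p) \<and> prime (n + a p r)" if "r < p" "\<not> p dvd c p + r" for r
    proof -
      have "(p, r) \<in> D" unfolding D_def using p that by simp
      hence "a p r \<in> T" unfolding T_def by force
      thus ?thesis using a[OF P_prime[OF p]] n by blast
    qed
  qed
  moreover have "H \<subseteq> T" unfolding T_def by blast
  ultimately show ?thesis using \<open>finite T\<close> by (intro exI[of _ T]) auto
qed

lemma prime_producing_large_translate:
  assumes "prime_producing hs" "0 \<in> set hs"
  shows "\<exists>n. N < n \<and> (\<forall>h\<in>set hs. prime (n + h))"
proof -
  let ?S = "{n::int. \<forall>h\<in>set hs. prime (n + int h)}"
  have "\<not> ?S \<subseteq> {2..int N}"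
    using assms(1) finite_subset unfolding prime_producing_def by blast
  then obtain n where n: "n \<in> ?S" "n \<notin> {2..int N}" by blast
  have "2 \<le> n" using n(1) assms(2) prime_ge_2_int by force
  hence "N < nat n" "int (nat n) = n" using n(2) by auto
  moreover have "prime (nat n + h)" if "h \<in> set hs" for h
    using n(1) that \<open>int (nat n) = n\<close> by (metis (mono_tags) mem_Collect_eq of_nat_add prime_nat_int_transfer)
  ultimately show ?thesis by blast
qed

lemma DHL_forced_prime_translate:
  fixes H P :: "nat set" and c :: "nat \<Rightarrow> nat" and N :: nat
  assumes "DHL" "finite H" "0 \<in> H" "finite P" "\<And>p. p \<in> P \<Longrightarrow> prime p"
    "\<And>p h. p \<in> P \<Longrightarrow> h \<in> H \<Longrightarrow> \<not> p dvd c p + h"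
    "\<And>q. prime q \<Longrightarrow> q \<notin> P \<Longrightarrow> \<exists>c. \<forall>h\<in>H. \<not> q dvd c + h"
  shows "\<exists>n. N < n \<and> (\<forall>h\<in>H. prime (n + h)) \<and> (\<forall>p\<in>P. [n = c p] (mod p))"
proof -
  obtain T where T: "finite T" "H \<subseteq> T" "\<And>q. prime q \<Longrightarrow> \<exists>c. \<forall>h\<in>T. \<not> q dvd c + h"
    "\<And>n. \<forall>h\<in>T. prime (n + h) \<Longrightarrow> \<forall>p\<in>P. p < n \<Longrightarrow> \<forall>p\<in>P. [n = c p] (mod p)"
    using admissible_superset_forcing_residues[OF assms(2-7)] by blast
  define hs where "hs = sorted_list_of_set T"
  have "set hs = T" unfolding hs_def using T(1) by simp
  hence "prime_producing hs"
    using assms(1) admissible_if_avoiding_shifts[of hs] T(3) unfolding DHL_def by blast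
  then obtain n where n: "N + \<Sum>P < n" "\<forall>h\<in>T. prime (n + h)"
    using prime_producing_large_translate \<open>set hs = T\<close> T(2) assms(3) by blast
  have "\<forall>p\<in>P. p < n" using n(1) member_le_sum[of _ P id] assms(4) by fastforce
  thus ?thesis using n T(2,4) by (intro exI[of _ n]) auto
qed

lemma exists_seq_of_extensions:
  fixes P :: "(nat \<Rightarrow> 'a) \<Rightarrow> nat \<Rightarrow> bool"
  assumes local: "\<And>b b' l. (\<And>i. i \<le> l \<Longrightarrow> b i = b' i) \<Longrightarrow> P b l \<Longrightarrow> P b' l"
    and extend: "\<And>b l. (\<And>i. i < l \<Longrightarrow> P b i) \<Longrightarrow> \<exists>x. P (b(l := x)) l"
  shows "\<exists>g. \<forall>l. P g l"
proof -
  define prefix where "prefix n b \<longleftrightarrow> (\<forall>i<n. P b i)" for n b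
  have "\<exists>f. \<forall>n. prefix n (f n) \<and> f (Suc n) = (f n)(n := f (Suc n) n)"
  proof (rule dependent_nat_choice)
    show "\<exists>b. prefix 0 b" unfolding prefix_def by simp
  next
    fix b n assume "prefix n b"
    then obtain x where x: "P (b(n := x)) n" using extend unfolding prefix_def by blast
    have "P (b(n := x)) i" if "i < n" for i
      using local[of i b "b(n := x)"] \<open>prefix n b\<close> that unfolding prefix_def by simp
    hence "prefix (Suc n) (b(n := x))" using x unfolding prefix_def by (simp add: less_Suc_eq)
    thus "\<exists>b'. prefix (Suc n) b' \<and> b' = b(n := b' n)" by (intro exI[of _ "b(n := x)"]) simp
  qed
  then obtain f where f: "\<And>n. prefix n (f n)" "\<And>n. f (Suc n) = (f n)(n := f (Suc n) n)" by blast
  have stable: "f m i = f (Suc i) i" if "i < m" for m i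
    using that
  proof (induction m)
    case (Suc m)
    show ?case
    proof (cases "i = m")
      case False
      hence "f (Suc m) i = f m i" by (subst f(2)) simp
      thus ?thesis using Suc False by simp
    qed simp
  qed simp
  have "P (\<lambda>i. f (Suc i) i) l" for l
  proof (rule local[of l "f (Suc l)"])
    show "f (Suc l) i = f (Suc i) i" if "i \<le> l" for i by (rule stable) (use that in simp)
    show "P (f (Suc l)) l" using f(1)[of "Suc l"] unfolding prefix_def by simp
  qed
  thus ?thesis by blast
qed

text \<open>
  The bound \<open>2 * l + 3\<close> grows fast enough that a prime exceeding it for all \<open>l < k\<close>, with
  \<open>k > 0\<close>, exceeds \<open>k + 2\<close>, the number of residues to avoid when choosing the next class.
\<close>

definition prime_sum_extension :: "(nat \<Rightarrow> nat) \<Rightarrow> nat \<Rightarrow> bool" where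
  "prime_sum_extension b l \<longleftrightarrow>
     prime (b l) \<and> 2 * l + 3 < b l \<and> (\<forall>p. prime p \<longrightarrow> p \<le> 2 * l + 3 \<longrightarrow> \<not> p dvd 2 * b l + 1) \<and>
     (\<forall>i<l. prime (b i + b l + 1) \<and> (\<forall>p. prime p \<longrightarrow> p \<le> 2 * i + 3 \<longrightarrow> [b i = b l] (mod p)))"

lemma prime_sum_extension_local:
  assumes "\<And>i. i \<le> l \<Longrightarrow> b i = b' i" "prime_sum_extension b l"
  shows "prime_sum_extension b' l"
proof -
  have "b' l = b l" "\<And>i. i < l \<Longrightarrow> b' i = b i" using assms(1) by simp_all
  thus ?thesis using assms(2) unfolding prime_sum_extension_def by simp
qed

lemma prime_sum_extensions_cong_mod:
  assumes "\<And>i. i < k \<Longrightarrow> prime_sum_extension b i" "i < k" "j < k" "prime p"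
    "p \<le> 2 * i + 3" "p \<le> 2 * j + 3"
  shows "[b i = b j] (mod p)"
proof -
  have "[b i = b j] (mod p)" if "i < j" "j < k" "p \<le> 2 * i + 3" for i j
    using assms(1)[OF \<open>j < k\<close>] that assms(4) unfolding prime_sum_extension_def by blast
  thus ?thesis using assms(2-6) by (metis cong_sym cong_refl linorder_neqE_nat)
qed

lemma prime_sum_extensions_sum_prime:
  assumes "\<And>i. i < k \<Longrightarrow> prime_sum_extension b i" "i < k" "j < k" "i \<noteq> j"
  shows "prime (b i + b j + 1)"
proof -
  have "prime (b i + b j + 1)" if "i < j" "j < k" for i j
    using assms(1)[OF \<open>j < k\<close>] that unfolding prime_sum_extension_def by blast
  thus ?thesis using assms(2-4) by (metis add.commute linorder_neqE_nat)
qed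

lemma prime_not_dvd_larger_prime:
  fixes p q :: nat
  assumes "prime p" "prime q" "p < q"
  shows "\<not> p dvd q"
  using assms primes_dvd_imp_eq by (metis less_not_refl)

lemma prime_sum_extensions_residue_class:
  assumes ext: "\<And>i. i < k \<Longrightarrow> prime_sum_extension b i"
    and "i < k" "prime p" "p \<le> 2 * i + 3"
  shows "\<not> p dvd 2 * b i + 1 \<and> (\<forall>h\<in>insert 0 ((\<lambda>j. b j + 1) ` {..<k}). \<not> p dvd b i + h) \<and>
           (\<forall>j<k. p \<le> 2 * j + 3 \<longrightarrow> [b j = b i] (mod p))"
proof -
  have bi: "prime (b i)" "2 * i + 3 < b i" "\<not> p dvd 2 * b i + 1"
    using ext[OF \<open>i < k\<close>] assms(3,4) unfolding prime_sum_extension_def by blast+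
  have "\<not> p dvd b i + (b j + 1)" if "j < k" for j
  proof (cases "j = i")
    case True
    have "b i + (b j + 1) = 2 * b i + 1" using True by simp
    thus ?thesis using bi(3) by metis
  next
    case False
    have "prime (b i + b j + 1)" using prime_sum_extensions_sum_prime[OF ext \<open>i < k\<close> that] False by simp
    moreover have "p < b i + b j + 1" using bi(2) assms(4) by linarith
    ultimately show ?thesis using prime_not_dvd_larger_prime \<open>prime p\<close> by (simp add: add.assoc)
  qed
  moreover have "\<not> p dvd b i" using prime_not_dvd_larger_prime \<open>prime p\<close> bi(1,2) assms(4) by simp
  moreover have "[b j = b i] (mod p)" if "j < k" "p \<le> 2 * j + 3" for j
    using prime_sum_extensions_cong_mod[OF ext that(1) \<open>i < k\<close> \<open>prime p\<close> that(2) assms(4)] .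
  ultimately show ?thesis using bi(3) by auto
qed

lemma small_prime_residue_choice:
  assumes ext: "\<And>i. i < k \<Longrightarrow> prime_sum_extension b i" and "prime p" "p \<le> 2 * k + 3"
  shows "\<exists>c. \<not> p dvd 2 * c + 1 \<and> (\<forall>h\<in>insert 0 ((\<lambda>i. b i + 1) ` {..<k}). \<not> p dvd c + h) \<and>
           (\<forall>i<k. p \<le> 2 * i + 3 \<longrightarrow> [b i = c] (mod p))"
proof (cases "\<exists>i<k. p \<le> 2 * i + 3")
  case True
  then obtain i where "i < k" "p \<le> 2 * i + 3" by blast
  thus ?thesis using prime_sum_extensions_residue_class[OF ext _ \<open>prime p\<close>] by blast
next
  case False
  hence late: "\<forall>i<k. 2 * i + 3 < p" by auto
  show ?thesis
  proof (cases "k = 0 \<and> p = 2")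
    case True
    thus ?thesis by (intro exI[of _ 1]) auto
  next
    case False
    have "k + 3 \<le> p"
    proof (cases k)
      case 0 thus ?thesis using False prime_ge_2_nat[OF \<open>prime p\<close>] by auto
    next
      case (Suc j) thus ?thesis using late by auto
    qed
    moreover have "card (insert 0 ((\<lambda>i. b i + 1) ` {..<k})) \<le> Suc k"
      using card_image_le[of "{..<k}" "\<lambda>i. b i + 1"] by (intro card_insert_le_m1) simp_all
    ultimately have "\<exists>c. \<not> p dvd 2 * c + 1 \<and> (\<forall>h\<in>insert 0 ((\<lambda>i. b i + 1) ` {..<k}). \<not> p dvd c + h)"
      by (intro exists_shift_avoiding_multiples_and_half) simp_all
    thus ?thesis using late by (meson leD)
  qed
qed

lemma prime_sum_extension_exists:
  assumes "DHL" and ext: "\<And>i. i < k \<Longrightarrow> prime_sum_extension b i"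
  shows "\<exists>x. prime_sum_extension (b(k := x)) k"
proof -
  define P where "P = {p. prime p \<and> p \<le> 2 * k + 3}"
  define H where "H = insert 0 ((\<lambda>i. b i + 1) ` {..<k})"
  have "\<forall>p. \<exists>c. p \<in> P \<longrightarrow> \<not> p dvd 2 * c + 1 \<and> (\<forall>h\<in>H. \<not> p dvd c + h) \<and>
          (\<forall>i<k. p \<le> 2 * i + 3 \<longrightarrow> [b i = c] (mod p))"
    using small_prime_residue_choice[OF ext] unfolding P_def H_def by blast
  then obtain c where c: "\<And>p. p \<in> P \<Longrightarrow> \<not> p dvd 2 * c p + 1"
    "\<And>p h. p \<in> P \<Longrightarrow> h \<in> H \<Longrightarrow> \<not> p dvd c p + h"
    "\<And>p i. p \<in> P \<Longrightarrow> i < k \<Longrightarrow> p \<le> 2 * i + 3 \<Longrightarrow> [b i = c p] (mod p)"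
    by metis
  have "card H \<le> Suc k"
    unfolding H_def using card_image_le[of "{..<k}" "\<lambda>i. b i + 1"]
    by (intro card_insert_le_m1) simp_all
  hence other: "\<exists>c. \<forall>h\<in>H. \<not> q dvd c + h" if "prime q" "q \<notin> P" for q
    using exists_shift_avoiding_multiples[of H q] that unfolding P_def H_def by simp
  have H: "finite H" "0 \<in> H" unfolding H_def by simp_all
  have P: "finite P" "\<And>p. p \<in> P \<Longrightarrow> prime p" unfolding P_def by simp_all
  have "\<exists>x. 2 * k + 3 < x \<and> (\<forall>h\<in>H. prime (x + h)) \<and> (\<forall>p\<in>P. [x = c p] (mod p))"
    by (rule DHL_forced_prime_translate[OF \<open>DHL\<close> H P c(2) other])
  then obtain x where x: "2 * k + 3 < x" "\<forall>h\<in>H. prime (x + h)" "\<forall>p\<in>P. [x = c p] (mod p)"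
    by blast
  have "\<not> p dvd 2 * x + 1" if "p \<in> P" for p
  proof -
    have "[2 * x + 1 = 2 * c p + 1] (mod p)" using x(3) that by (intro cong_add cong_mult cong_refl) blast
    thus ?thesis using c(1)[OF that] cong_dvd_iff by blast
  qed
  moreover have "prime (b i + x + 1)" if "i < k" for i
  proof -
    have "prime (x + (b i + 1))" using x(2) that unfolding H_def by blast
    thus ?thesis by (simp add: ac_simps)
  qed
  moreover have "[b i = x] (mod p)" if "i < k" "prime p" "p \<le> 2 * i + 3" for i p
  proof -
    have "p \<in> P" using that unfolding P_def by simp
    thus ?thesis using cong_trans[OF c(3)[OF _ that(1,3)] cong_sym] x(3) by blast
  qed
  moreover have "prime x" using x(2) unfolding H_def by simp
  ultimately show ?thesis using x(1) unfolding prime_sum_extension_def P_def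
    by (intro exI[of _ x]) auto
qed

theorem mainTheorem1:
  assumes "DHL"
  shows "\<exists>B::nat set. infinite B \<and> (\<forall>b\<in>B. prime b) \<and>
           (\<forall>b\<in>B. \<forall>b'\<in>B. b \<noteq> b' \<longrightarrow> prime (b + b' + 1))"
proof -
  have "\<exists>g. \<forall>l. prime_sum_extension g l"
    by (rule exists_seq_of_extensions[OF prime_sum_extension_local prime_sum_extension_exists[OF assms]])
  then obtain g where g: "\<And>l. prime_sum_extension g l" by blast
  have "l < g l" for l using g[of l] unfolding prime_sum_extension_def by linarith
  hence "infinite (range g)" unfolding infinite_nat_iff_unbounded by blast
  moreover have "prime (g i)" for i using g[of i] unfolding prime_sum_extension_def by blast
  moreover have "prime (g i + g j + 1)" if "g i \<noteq> g j" for i j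
    by (rule prime_sum_extensions_sum_prime[of "Suc (max i j)" g]) (use g that in auto)
  ultimately show ?thesis by (intro exI[of _ "range g"]) blast
qed

end
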